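(* Let $f$ be a transcendental meromorphic function projectable via $\exp_1$, and $g$ its exponential projection, written as $g(w)=w^\ell e^{2\pi i\Phi(w)}$ with $\ell\in\mathbb{Z}$ and $\Phi$ meromorphic in $\mathbb{C}^*$. Then $$\mathcal{C}(g)\cap\mathbb{C}^*=\exp_1\big(\mathcal{C}(f)\setminus f^{-1}(\infty)\big).$$ If $0$ is not an omitted value of $f'$, then $\#\mathcal{C}(f)=\infty$ and $\mathcal{C}(g)\cap\mathbb{C}^*\neq\emptyset$. Moreover, $0\in\mathcal{C}(g)$ (resp. $\infty\in\mathcal{C}(g)$) if and only if $g(0)$ (resp. $g(\infty)$) is defined and either $|\ell|\ge2$, or $\ell=0$ with $\Phi'(0)=0$ (resp. $\Phi'(\infty)=0$).
   Context: $\exp_1(z)=e^{2\pi iz}$; $f$ is projectable via $\exp_1$ if there is $g$ with $g\circ\exp_1=\exp_1\circ f$ wherever defined; here $f(z)=\ell z+\Phi(e^{2\pi iz})$. $g$ is meromorphic outside its closed countable set $\mathcal{E}(g)$ of essential singularities; $g(0)$ defined means $0\notin\mathcal{E}(g)$. $\mathcal{C}(\cdot)$ denotes the set of critical points: points in the domain of definition where the map is not locally injective (including multiple poles of $f$, and multiple preimages of essential singularities of $g$). $\Phi'(\infty)=0$ means the derivative in the local coordinate $1/w$ at $\infty$ vanishes. *)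

theory Defs
  imports "HOL-Complex_Analysis.Complex_Analysis" "HOL-Computational_Algebra.Polynomial"
begin

definition exp1 :: "complex \<Rightarrow> complex" where
  "exp1 z = exp (2 * of_real pi * \<i> * z)"

definition rational_fun :: "(complex \<Rightarrow> complex) \<Rightarrow> bool" where
  "rational_fun f \<longleftrightarrow> (\<exists>p q :: complex poly. q \<noteq> 0 \<and>
      (\<forall>z. poly q z \<noteq> 0 \<and> \<not> is_pole f z \<longrightarrow> f z = poly p z / poly q z))"

definition transcendental_mero :: "(complex \<Rightarrow> complex) \<Rightarrow> bool" where
  "transcendental_mero f \<longleftrightarrow> f nicely_meromorphic_on UNIV \<and> \<not> rational_fun f"

text \<open>\<open>h\<close> is defined (as a map into the Riemann sphere) at the point \<open>z\<close> of the
  plane: \<open>z\<close> is not an essential singularity, i.e. \<open>h\<close> is meromorphic at \<open>z\<close>.\<close>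
definition defined_at :: "(complex \<Rightarrow> complex) \<Rightarrow> complex \<Rightarrow> bool" where
  "defined_at h z \<longleftrightarrow> h meromorphic_on {z}"

text \<open>Value of \<open>h\<close> at \<open>z\<close> in the Riemann sphere \<open>complex option\<close>, where \<open>None\<close> is \<open>\<infinity>\<close>;
  removable singularities are filled in by the limit.\<close>
definition sphere_val :: "(complex \<Rightarrow> complex) \<Rightarrow> complex \<Rightarrow> complex option" where
  "sphere_val h z = (if is_pole h z then None else Some (remove_sings h z))"

text \<open>Critical points (in the plane): points of the domain of definition at which
  the map into the Riemann sphere is not locally injective.  This includes multiple
  poles.  Critical points at \<open>\<infinity>\<close> are handled via the chart \<open>1/w\<close>.\<close>
definition crit :: "(complex \<Rightarrow> complex) \<Rightarrow> complex set" where
  "crit h = {z. defined_at h z \<and> \<not> (\<exists>e>0. inj_on (sphere_val h) (ball z e))}"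

end

theory Submission
  imports Defs
begin

text \<open>
  Put \<open>q(w) = l + 2\<pi>i w \<Phi>'(w)\<close>. Where \<open>\<Phi>\<close> is holomorphic, \<open>f'(z) = q(exp1 z)\<close> and
  \<open>w g'(w) = g(w) q(w)\<close> with \<open>g(w) \<noteq> 0\<close>, so the critical points of \<open>f\<close> that are not poles and the nonzero
  critical points of \<open>g\<close> correspond under \<open>exp1\<close>. A pole of \<open>\<Phi>\<close> is a pole of \<open>f\<close> but an
  essential singularity of \<open>g\<close>, because \<open>exp1 \<circ> \<Phi>\<close> takes both values \<open>1\<close> and \<open>-1\<close> near it.
  As \<open>f'\<close> is 1-periodic, one critical point of \<open>f\<close> yields infinitely many.

  If \<open>g\<close> is meromorphic at \<open>0\<close>, write \<open>g(w) = w\<^sup>n h(w)\<close> with \<open>h(0) \<noteq> 0\<close>. Then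
  \<open>exp1 \<circ> \<Phi> = w\<^sup>n\<^sup>-\<^sup>l h\<close> has a logarithm on a punctured disc, which forces \<open>n = l\<close> and
  makes \<open>\<Phi>\<close> holomorphic at \<open>0\<close>. So \<open>g = w\<^sup>l E\<close> with \<open>E(0) \<noteq> 0\<close>, and \<open>0\<close> is critical iff
  \<open>|l| \<ge> 2\<close>, or \<open>l = 0\<close> and \<open>E'(0) = 0\<close>, i.e. \<open>\<Phi>'(0) = 0\<close>. The point \<open>\<infinity>\<close> is handled through
  \<open>w \<mapsto> 1/w\<close>, which turns \<open>l\<close> into \<open>-l\<close>.
\<close>

lemma exp1_nonzero [simp]: "exp1 z \<noteq> 0"
  by (simp add: exp1_def)

lemma exp1_eq_exp1_iff: "exp1 u = exp1 z \<longleftrightarrow> (\<exists>n::int. u = z + of_int n)"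
proof -
  have "exp1 u = exp1 z \<longleftrightarrow> (\<exists>n::int. 2 * of_real pi * \<i> * u = 2 * of_real pi * \<i> * (z + of_int n))"
    unfolding exp1_def exp_eq by (simp add: algebra_simps)
  thus ?thesis by simp
qed

lemma exp1_add_of_int [simp]: "exp1 (z + of_int n) = exp1 z"
  by (auto simp: exp1_eq_exp1_iff)

lemma exp1_Ln: "w \<noteq> 0 \<Longrightarrow> exp1 (Ln w / (2 * of_real pi * \<i>)) = w"
  by (simp add: exp1_def)

lemma analytic_on_exp1 [analytic_intros]:
  "f analytic_on A \<Longrightarrow> (\<lambda>z. exp1 (f z)) analytic_on A"
  unfolding exp1_def by (intro analytic_intros)

lemma analytic_at_comp_exp1: "\<Phi> analytic_on {exp1 z} \<Longrightarrow> (\<lambda>u. \<Phi> (exp1 u)) analytic_on {z}"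
  using analytic_on_compose_gen[of exp1 "{z}" \<Phi> "{exp1 z}"] analytic_on_exp1[OF analytic_on_ident]
  by (simp add: comp_def)

lemma has_field_derivative_exp1: "(exp1 has_field_derivative 2 * of_real pi * \<i> * exp1 z) (at z)"
  unfolding exp1_def by (auto intro!: derivative_eq_intros)

lemma eventually_exp1_neq: "eventually (\<lambda>u. exp1 u \<noteq> exp1 z) (at z)"
proof -
  have "eventually (\<lambda>u. u \<noteq> z \<and> dist u z < 1) (at z)"
    by (auto simp: eventually_at intro: exI[of _ 1])
  thus ?thesis
  proof eventually_elim
    case (elim u)
    show ?case
    proof
      assume "exp1 u = exp1 z"
      then obtain n :: int where n: "u = z + of_int n" by (auto simp: exp1_eq_exp1_iff)
      with elim have "n \<noteq> 0" by auto
      hence "1 \<le> norm (of_int n :: complex)" by (simp add: norm_of_int)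
      with elim n show False by (simp add: dist_norm)
    qed
  qed
qed

section \<open>Critical points and derivatives\<close>

lemma tendsto_if_eq_off_point:
  fixes F h :: "'a::t1_space \<Rightarrow> 'b::topological_space"
  assumes "open S" "continuous_on S F" "\<And>x. x \<in> S - {z} \<Longrightarrow> h x = F x" "u \<in> S"
  shows "h \<midarrow>u\<rightarrow> F u"
proof -
  have "eventually (\<lambda>x. x \<in> S - {z}) (at u)"
  proof (cases "u = z")
    case True
    show ?thesis using eventually_at_in_open[OF assms(1,4)] True by simp
  next
    case False
    with assms show ?thesis by (intro eventually_at_in_open' open_Diff closed_singleton) auto
  qed
  hence "eventually (\<lambda>x. F x = h x) (at u)"
    by eventually_elim (use assms(3) in auto)
  moreover have "F \<midarrow>u\<rightarrow> F u"
    using assms(1,2,4) by (metis at_within_open continuous_on_def)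
  ultimately show ?thesis by (rule Lim_transform_eventually[rotated])
qed

lemma not_is_pole_if_tendsto:
  fixes f :: "'a::perfect_space \<Rightarrow> 'b::real_normed_vector"
  shows "f \<midarrow>z\<rightarrow> c \<Longrightarrow> \<not> is_pole f z"
  unfolding is_pole_def using not_tendsto_and_filterlim_at_infinity[OF at_neq_bot] by blast

lemma sphere_val_eq_Some: "h \<midarrow>z\<rightarrow> c \<Longrightarrow> sphere_val h z = Some c"
  by (simp add: sphere_val_def not_is_pole_if_tendsto remove_sings_eqI)

lemma ex_inj_on_ball_iff_ex_le:
  assumes "r > 0"
  shows "(\<exists>e>0. inj_on \<phi> (ball z e)) \<longleftrightarrow> (\<exists>e>0. e \<le> r \<and> inj_on \<phi> (ball z e))"
proof
  assume "\<exists>e>0. inj_on \<phi> (ball z e)"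
  then obtain e where "e > 0" "inj_on \<phi> (ball z e)" by blast
  hence "inj_on \<phi> (ball z (min e r))"
    by (meson inj_on_subset min.cobounded1 subset_ball)
  thus "\<exists>e>0. e \<le> r \<and> inj_on \<phi> (ball z e)"
    using \<open>e > 0\<close> assms by (intro exI[of _ "min e r"]) auto
qed blast

lemma ex_locally_inj_iff_deriv_nonzero:
  assumes "r > 0" "F holomorphic_on ball z r"
  shows "(\<exists>e>0. inj_on F (ball z e)) \<longleftrightarrow> deriv F z \<noteq> 0"
proof
  assume "\<exists>e>0. inj_on F (ball z e)"
  then obtain e where "e > 0" "e \<le> r" "inj_on F (ball z e)"
    using ex_inj_on_ball_iff_ex_le[OF \<open>r > 0\<close>] by blast
  moreover have "F holomorphic_on ball z e"
    using assms(2) \<open>e \<le> r\<close> by (rule holomorphic_on_subset[OF _ subset_ball])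
  ultimately show "deriv F z \<noteq> 0"
    by (intro holomorphic_injective_imp_regular) auto
next
  assume "deriv F z \<noteq> 0"
  with assms obtain e where "e > 0" "inj_on F (ball z e)"
    by (metis centre_in_ball has_complex_derivative_locally_injective open_ball)
  thus "\<exists>e>0. inj_on F (ball z e)" by blast
qed

lemma crit_iff_deriv_eq_0_if_sphere_val_eq:
  fixes \<sigma> :: "complex \<Rightarrow> complex option"
  assumes "r > 0" "F holomorphic_on ball z r" "inj \<sigma>" "defined_at h z"
    and sv: "\<And>u. u \<in> ball z r \<Longrightarrow> sphere_val h u = \<sigma> (F u)"
  shows "z \<in> crit h \<longleftrightarrow> deriv F z = 0"
proof -
  have inj_iff: "inj_on (sphere_val h) (ball z e) \<longleftrightarrow> inj_on F (ball z e)" if "e \<le> r" for e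
  proof -
    have "inj_on (sphere_val h) (ball z e) \<longleftrightarrow> inj_on (\<sigma> \<circ> F) (ball z e)"
      using that by (intro inj_on_cong) (simp add: sv)
    also have "\<dots> \<longleftrightarrow> inj_on F (ball z e)"
      by (simp add: inj_on_def inj_eq[OF \<open>inj \<sigma>\<close>])
    finally show ?thesis .
  qed
  have "(\<exists>e>0. inj_on (sphere_val h) (ball z e)) \<longleftrightarrow> (\<exists>e>0. e \<le> r \<and> inj_on (sphere_val h) (ball z e))"
    using \<open>r > 0\<close> by (rule ex_inj_on_ball_iff_ex_le)
  also have "\<dots> \<longleftrightarrow> (\<exists>e>0. e \<le> r \<and> inj_on F (ball z e))"
    using inj_iff by (simp cong: conj_cong)
  also have "\<dots> \<longleftrightarrow> (\<exists>e>0. inj_on F (ball z e))"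
    using \<open>r > 0\<close> by (rule ex_inj_on_ball_iff_ex_le[symmetric])
  also have "\<dots> \<longleftrightarrow> deriv F z \<noteq> 0"
    using assms(1,2) by (rule ex_locally_inj_iff_deriv_nonzero)
  finally show ?thesis
    using \<open>defined_at h z\<close> by (auto simp: crit_def)
qed

lemma analytic_at_eventually_ballE:
  assumes "F analytic_on {z}" "eventually P (at z)"
  obtains r where "r > 0" "F holomorphic_on ball z r" "\<And>u. u \<in> ball z r - {z} \<Longrightarrow> P u"
proof -
  obtain r1 where r1: "r1 > 0" "F holomorphic_on ball z r1"
    using assms(1) by (auto simp: analytic_on_def)
  obtain r2 where r2: "r2 > 0" "\<And>u. u \<noteq> z \<Longrightarrow> dist u z < r2 \<Longrightarrow> P u"
    using assms(2) by (auto simp: eventually_at)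
  show ?thesis
  proof
    show "min r1 r2 > 0" using r1 r2 by simp
    show "F holomorphic_on ball z (min r1 r2)" using r1(2) by (rule holomorphic_on_subset) auto
    show "P u" if "u \<in> ball z (min r1 r2) - {z}" for u
      using that r2(2) by (auto simp: dist_commute)
  qed
qed

lemma crit_iff_deriv_eq_0:
  assumes F: "F analytic_on {z}" and eq: "eventually (\<lambda>u. h u = F u) (at z)"
  shows "z \<in> crit h \<longleftrightarrow> deriv F z = 0"
proof -
  obtain r where r: "r > 0" "F holomorphic_on ball z r" "\<And>u. u \<in> ball z r - {z} \<Longrightarrow> h u = F u"
    using analytic_at_eventually_ballE[OF F eq] by blast
  have "h meromorphic_on {z} \<longleftrightarrow> F meromorphic_on {z}"
    using eq by (intro meromorphic_on_cong) auto
  hence "defined_at h z"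
    using F by (simp add: defined_at_def analytic_on_imp_meromorphic_on)
  moreover have "sphere_val h u = Some (F u)" if "u \<in> ball z r" for u
    using r that
    by (intro sphere_val_eq_Some tendsto_if_eq_off_point[where S = "ball z r"]
        holomorphic_on_imp_continuous_on) auto
  ultimately show ?thesis
    using r by (intro crit_iff_deriv_eq_0_if_sphere_val_eq[where \<sigma> = Some]) auto
qed

lemma crit_pole_iff_deriv_eq_0:
  assumes F: "F analytic_on {z}" and zero: "isolated_zero F z"
    and eq: "eventually (\<lambda>u. h u = inverse (F u)) (at z)"
  shows "z \<in> crit h \<longleftrightarrow> deriv F z = 0"
proof -
  define \<sigma> where "\<sigma> w = (if w = 0 then None else Some (inverse w))" for w :: complex
  have F0: "F \<midarrow>z\<rightarrow> 0" and "eventually (\<lambda>u. F u \<noteq> 0) (at z)"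
    using zero by (auto simp: isolated_zero_def)
  with eq have "eventually (\<lambda>u. F u \<noteq> 0 \<and> h u = inverse (F u)) (at z)"
    by (simp add: eventually_conj)
  then obtain r where r: "r > 0" "F holomorphic_on ball z r"
    and punct: "\<And>u. u \<in> ball z r - {z} \<Longrightarrow> F u \<noteq> 0 \<and> h u = inverse (F u)"
    using analytic_at_eventually_ballE[OF F] by blast
  have "F z = 0"
    using LIM_unique[OF isContD[OF analytic_at_imp_isCont[OF F]] F0] .
  have pole: "is_pole h z"
    by (rule is_pole_transform[OF isolated_zero_imp_pole_inverse[OF zero] eventually_mono[OF eq]])
      simp_all
  have "defined_at h z"
  proof -
    have "h meromorphic_on {z} \<longleftrightarrow> (\<lambda>u. inverse (F u)) meromorphic_on {z}"
      using eq by (intro meromorphic_on_cong) auto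
    moreover have "(\<lambda>u. inverse (F u)) meromorphic_on {z}"
      using F by (intro meromorphic_intros analytic_on_imp_meromorphic_on)
    ultimately show ?thesis by (simp add: defined_at_def)
  qed
  moreover have "sphere_val h u = \<sigma> (F u)" if "u \<in> ball z r" for u
  proof (cases "u = z")
    case True
    thus ?thesis using pole \<open>F z = 0\<close> by (simp add: sphere_val_def \<sigma>_def)
  next
    case False
    have "continuous_on (ball z r - {z}) F"
      using holomorphic_on_imp_continuous_on[OF r(2)] by (rule continuous_on_subset) auto
    hence "continuous_on (ball z r - {z}) (\<lambda>u. inverse (F u))"
      using punct by (intro continuous_on_inverse) auto
    hence "h \<midarrow>u\<rightarrow> inverse (F u)"
      using that False punct
      by (intro tendsto_if_eq_off_point[where S = "ball z r - {z}" and z = z]) (auto intro: open_Diff)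
    thus ?thesis using False that punct by (simp add: sphere_val_eq_Some \<sigma>_def)
  qed
  moreover have "inj \<sigma>" by (auto simp: inj_def \<sigma>_def split: if_splits)
  ultimately show ?thesis
    using r by (intro crit_iff_deriv_eq_0_if_sphere_val_eq) auto
qed

lemma nicely_meromorphic_on_isolated_singularity:
  "f nicely_meromorphic_on A \<Longrightarrow> z \<in> A \<Longrightarrow> isolated_singularity_at f z"
  by (meson meromorphic_on_isolated_singularity meromorphic_on_subset nicely_meromorphic_on_def
      empty_subsetI insert_subset)

section \<open>Poles in the exponent give essential singularities\<close>

text \<open>Open mapping theorem for \<open>1/\<Psi>\<close>, extended by \<open>0\<close> at the pole.\<close>

lemma pole_attains_large_values:
  assumes iso: "isolated_singularity_at \<Psi> w" and pole: "is_pole \<Psi> w" and "e > 0"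
  obtains R where "\<And>c. R < norm c \<Longrightarrow> \<exists>u. u \<noteq> w \<and> dist u w < e \<and> \<Psi> u = c"
proof -
  obtain r0 where r0: "r0 > 0" "\<Psi> analytic_on ball w r0 - {w}"
    using iso by (auto simp: isolated_singularity_at_def)
  obtain d where d: "d > 0" "\<And>u. u \<noteq> w \<Longrightarrow> dist u w < d \<Longrightarrow> \<Psi> u \<noteq> 0"
    using non_zero_neighbour_pole[OF pole] by (auto simp: eventually_at)
  define r where "r = min e (min r0 d)"
  have r: "r > 0" "r \<le> e"
    using r0 d \<open>e > 0\<close> by (auto simp: r_def)
  have nz: "\<Psi> u \<noteq> 0" if "u \<in> ball w r - {w}" for u
    using that d(2)[of u] by (auto simp: r_def dist_commute)
  define R where "R x = (if x = w then 0 else inverse (\<Psi> x))" for x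
  have "R holomorphic_on ball w r"
  proof -
    have "\<Psi> holomorphic_on ball w r - {w}"
      using r0(2) by (rule analytic_imp_holomorphic[OF analytic_on_subset]) (auto simp: r_def)
    thus ?thesis
      unfolding R_def using pole nz by (intro is_pole_inverse_holomorphic) auto
  qed
  moreover have "\<not> R constant_on ball w r"
  proof
    assume "R constant_on ball w r"
    moreover have "w + of_real (r / 2) \<in> ball w r - {w}" "w \<in> ball w r"
      using r by (auto simp: dist_norm)
    ultimately have "R (w + of_real (r / 2)) = R w"
      by (auto simp: constant_on_def)
    thus False
      using nz[of "w + of_real (r / 2)"] r by (auto simp: R_def dist_norm)
  qed
  ultimately have "open (R ` ball w r)"
    by (intro open_mapping_thm[of R "ball w r"]) auto
  moreover have "0 \<in> R ` ball w r"
    using r by (auto simp: R_def intro!: image_eqI[of _ _ w])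
  ultimately obtain \<delta> where \<delta>: "\<delta> > 0" "ball 0 \<delta> \<subseteq> R ` ball w r"
    by (meson openE)
  show ?thesis
  proof
    fix c :: complex
    assume c: "1 / \<delta> < norm c"
    have "c \<noteq> 0"
      using c \<delta>(1) by auto
    have "inverse (norm c) < inverse (1 / \<delta>)"
      using c \<delta>(1) by (intro less_imp_inverse_less) auto
    hence "norm (inverse c) < \<delta>"
      by (simp add: norm_inverse)
    then obtain u where u: "u \<in> ball w r" "R u = inverse c"
      using \<delta>(2) by (force simp: dist_norm)
    with \<open>c \<noteq> 0\<close> have "u \<noteq> w" "\<Psi> u = c"
      by (auto simp: R_def split: if_splits)
    thus "\<exists>u. u \<noteq> w \<and> dist u w < e \<and> \<Psi> u = c"
      using u(1) r by (auto simp: dist_commute)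
  qed
qed

text \<open>Take \<open>exp1 a = b\<close>; by periodicity \<open>exp1 \<circ> \<Psi> = b\<close> wherever \<open>\<Psi> = a + n\<close>, \<open>n\<close> large.\<close>

lemma frequently_exp1_of_pole_eq:
  assumes "isolated_singularity_at \<Psi> w" "is_pole \<Psi> w" "b \<noteq> 0"
  shows "\<exists>\<^sub>F u in at w. exp1 (\<Psi> u) = b"
  unfolding frequently_at
proof (intro allI impI)
  fix e :: real
  assume "e > 0"
  define a where "a = Ln b / (2 * of_real pi * \<i>)"
  obtain R where R: "\<And>c. R < norm c \<Longrightarrow> \<exists>u. u \<noteq> w \<and> dist u w < e \<and> \<Psi> u = c"
    using pole_attains_large_values[OF assms(1,2) \<open>e > 0\<close>] by blast
  obtain n :: nat where n: "R + norm a < real n"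
    using reals_Archimedean2 by blast
  have "R < norm (a + of_nat n)"
    using n norm_triangle_ineq2[of "of_nat n" "- a"] by (simp add: norm_minus_commute add.commute)
  then obtain u where "u \<noteq> w" "dist u w < e" "\<Psi> u = a + of_nat n"
    using R by blast
  moreover have "exp1 (a + of_nat n) = b"
    using exp1_add_of_int[of a "int n"] exp1_Ln[OF \<open>b \<noteq> 0\<close>] by (simp add: a_def)
  ultimately show "\<exists>u\<in>UNIV. u \<noteq> w \<and> dist u w < e \<and> exp1 (\<Psi> u) = b"
    by auto
qed

lemma tendsto_eq_if_frequently_eq:
  fixes f :: "'a \<Rightarrow> 'b::t1_space"
  assumes "(f \<longlongrightarrow> c) F" "\<exists>\<^sub>F x in F. f x = a"
  shows "c = a"
proof (rule ccontr)
  assume "c \<noteq> a"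
  with assms(1) have "eventually (\<lambda>x. f x \<noteq> a) F"
    by (rule tendsto_imp_eventually_ne)
  with assms(2) show False
    by (simp add: frequently_def)
qed

lemma essential_if_frequently_eq_pm:
  fixes k v :: "complex \<Rightarrow> complex"
  assumes v: "v \<midarrow>w\<rightarrow> d" "d \<noteq> 0"
    and plus: "\<exists>\<^sub>F u in at w. k u = v u" and minus: "\<exists>\<^sub>F u in at w. k u = - v u"
  shows "\<not> not_essential k w"
proof
  have plus': "\<exists>\<^sub>F u in at w. k u - v u = 0"
    using plus by (rule frequently_elim1) simp
  have minus': "\<exists>\<^sub>F u in at w. k u + v u = 0"
    using minus by (rule frequently_elim1) simp
  assume "not_essential k w"
  then consider c where "k \<midarrow>w\<rightarrow> c" | "is_pole k w"
    by (auto simp: not_essential_def)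
  thus False
  proof cases
    case (1 c)
    have "c - d = 0"
      using tendsto_diff[OF 1 v(1)] plus' by (rule tendsto_eq_if_frequently_eq)
    moreover have "c + d = 0"
      using tendsto_add[OF 1 v(1)] minus' by (rule tendsto_eq_if_frequently_eq)
    ultimately show False
      using v(2) by (simp add: algebra_simps)
  next
    case 2
    hence "is_pole (\<lambda>u. k u + - v u) w"
      unfolding is_pole_def using tendsto_minus[OF v(1)] by (rule tendsto_add_filterlim_at_infinity')
    thus False
      using frequently_const_imp_not_is_pole[OF plus'] by simp
  qed
qed

lemma essential_if_pole_in_exponent:
  assumes iso: "isolated_singularity_at \<Psi> w" and pole: "is_pole \<Psi> w" and "w \<noteq> 0"
    and keq: "eventually (\<lambda>u. k u = u powi m * exp1 (\<Psi> u)) (at w)"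
  shows "\<not> not_essential k w"
proof (rule essential_if_frequently_eq_pm)
  have freq: "\<exists>\<^sub>F u in at w. k u = c * u powi m" if "c \<noteq> 0" for c
  proof -
    have "\<exists>\<^sub>F u in at w. exp1 (\<Psi> u) = c"
      using iso pole that by (rule frequently_exp1_of_pole_eq)
    with keq have "\<exists>\<^sub>F u in at w. k u = u powi m * exp1 (\<Psi> u) \<and> exp1 (\<Psi> u) = c"
      by (intro frequently_eventually_conj)
    thus ?thesis
      by (rule frequently_elim1) (simp only: mult.commute)
  qed
  show "\<exists>\<^sub>F u in at w. k u = u powi m"
    using freq[of 1] by simp
  show "\<exists>\<^sub>F u in at w. k u = - (u powi m)"
    using freq[of "-1"] by simp
  show "(\<lambda>u. u powi m) \<midarrow>w\<rightarrow> w powi m"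
    using \<open>w \<noteq> 0\<close> by (intro tendsto_intros)
  show "w powi m \<noteq> 0"
    using \<open>w \<noteq> 0\<close> by simp
qed

section \<open>Critical points at the origin\<close>

lemma has_field_derivative_if_exp_eq_powi:
  assumes S: "open S" "0 \<notin> S" and \<psi>: "\<psi> holomorphic_on S"
    and exp\<psi>: "\<And>u. u \<in> S \<Longrightarrow> exp (\<psi> u) = u powi j" and "u \<in> S"
  shows "(\<psi> has_field_derivative of_int j / u) (at u)"
proof -
  have "u \<noteq> 0" using S \<open>u \<in> S\<close> by auto
  have d\<psi>: "(\<psi> has_field_derivative deriv \<psi> u) (at u)"
    using \<psi> S \<open>u \<in> S\<close> by (intro holomorphic_derivI) auto
  hence "((\<lambda>x. exp (\<psi> x)) has_field_derivative exp (\<psi> u) * deriv \<psi> u) (at u)"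
    by (auto intro!: derivative_eq_intros)
  hence "((\<lambda>x. x powi j) has_field_derivative exp (\<psi> u) * deriv \<psi> u) (at u)"
    by (rule has_field_derivative_transform_within_open[OF _ S(1) \<open>u \<in> S\<close>]) (use exp\<psi> in auto)
  moreover have "((\<lambda>x. x powi j) has_field_derivative of_int j * u powi (j - 1)) (at u)"
    using \<open>u \<noteq> 0\<close> by (auto intro!: derivative_eq_intros)
  ultimately have "u powi j * deriv \<psi> u = of_int j * u powi (j - 1)"
    using DERIV_unique exp\<psi>[OF \<open>u \<in> S\<close>] by metis
  hence "deriv \<psi> u = of_int j / u"
    using \<open>u \<noteq> 0\<close> by (simp add: power_int_diff field_simps)
  thus ?thesis using d\<psi> by simp
qed

lemma exp_eq_powi_on_punctured_ball_imp_eq_0: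
  assumes "r > 0" and \<psi>: "\<psi> holomorphic_on ball 0 r - {0}"
    and exp\<psi>: "\<And>u. u \<in> ball 0 r - {0} \<Longrightarrow> exp (\<psi> u) = u powi j"
  shows "j = 0"
proof -
  define \<gamma> where "\<gamma> = circlepath (0 :: complex) (r / 2)"
  have "path_image \<gamma> \<subseteq> ball 0 r - {0}"
    using \<open>r > 0\<close> by (auto simp: \<gamma>_def)
  moreover have "(\<psi> has_field_derivative of_int j / u) (at u)" if "u \<in> ball 0 r - {0}" for u
    using that \<psi> exp\<psi> by (intro has_field_derivative_if_exp_eq_powi[of "ball 0 r - {0}"]) auto
  ultimately have "((\<lambda>u. of_int j / u) has_contour_integral 0) \<gamma>"
    by (intro Cauchy_theorem_primitive[of "ball 0 r - {0}" \<psi>])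
      (auto simp: \<gamma>_def intro: has_field_derivative_at_within)
  moreover have "((\<lambda>u. of_int j / (u - 0)) has_contour_integral 2 * of_real pi * \<i> * of_int j) \<gamma>"
    unfolding \<gamma>_def using \<open>r > 0\<close> by (intro Cauchy_integral_circlepath_simple) auto
  ultimately show "j = 0"
    using has_contour_integral_unique by fastforce
qed

lemma removable_if_exp1_eq_powi_mult:
  assumes "r > 0" and \<Psi>: "\<Psi> holomorphic_on ball 0 r - {0}"
    and h: "h holomorphic_on ball 0 r" "\<And>u. u \<in> ball 0 r \<Longrightarrow> h u \<noteq> 0"
    and eq: "\<And>u. u \<in> ball 0 r - {0} \<Longrightarrow> exp1 (\<Psi> u) = u powi j * h u"
  obtains \<Psi>' where "\<Psi>' holomorphic_on ball 0 r" "\<And>u. u \<in> ball 0 r - {0} \<Longrightarrow> \<Psi> u = \<Psi>' u"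
proof -
  define S where "S = ball (0 :: complex) r - {0}"
  obtain L where L: "L holomorphic_on ball 0 r" "\<And>u. u \<in> ball 0 r \<Longrightarrow> exp (L u) = h u"
    using holomorphic_logarithm_exists[of "ball 0 r" h 0] h \<open>r > 0\<close> by auto
  define \<psi> where "\<psi> u = 2 * of_real pi * \<i> * \<Psi> u - L u" for u
  have \<psi>: "\<psi> holomorphic_on S"
    unfolding \<psi>_def S_def using \<Psi> L(1) by (intro holomorphic_intros) (auto elim: holomorphic_on_subset)
  have exp\<psi>: "exp (\<psi> u) = u powi j" if "u \<in> S" for u
    using that eq[of u] L(2)[of u] h(2)[of u]
    by (auto simp: \<psi>_def S_def exp_diff exp1_def)
  have "j = 0"
    using \<open>r > 0\<close> \<psi> exp\<psi> unfolding S_def by (rule exp_eq_powi_on_punctured_ball_imp_eq_0)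
  have S: "open S" "connected S" "0 \<notin> S"
    unfolding S_def by (auto intro!: connected_punctured_ball)
  have "\<forall>u\<in>S - {}. (\<psi> has_field_derivative 0) (at u)"
    using has_field_derivative_if_exp_eq_powi[OF S(1,3) \<psi> exp\<psi>] \<open>j = 0\<close> by simp
  with S obtain c where c: "\<And>u. u \<in> S \<Longrightarrow> \<psi> u = c"
    using DERIV_zero_connected_constant[of S "{}" \<psi>] \<psi> holomorphic_on_imp_continuous_on by blast
  show ?thesis
  proof
    show "(\<lambda>u. (c + L u) / (2 * of_real pi * \<i>)) holomorphic_on ball 0 r"
      using L(1) by (intro holomorphic_intros) auto
    show "\<Psi> u = (c + L u) / (2 * of_real pi * \<i>)" if "u \<in> ball 0 r - {0}" for u
      using c[of u] that by (simp add: S_def \<psi>_def field_simps)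
  qed
qed

lemma deriv_power_mult_at_0:
  assumes "(E has_field_derivative E') (at 0)"
  shows "deriv (\<lambda>u. u ^ n * E u) 0 = (if n = 0 then E' else if n = 1 then E 0 else 0)"
proof -
  have "((\<lambda>u. u ^ n * E u) has_field_derivative
          of_nat n * 0 ^ (n - 1) * E 0 + 0 ^ n * E') (at 0)"
    using assms by (auto intro!: derivative_eq_intros)
  thus ?thesis
    by (cases n) (auto dest!: DERIV_imp_deriv simp: power_0_left)
qed

lemma crit_0_powi_mult_exp1:
  assumes \<Psi>: "\<Psi> analytic_on {0}" and keq: "eventually (\<lambda>u. k u = u powi m * exp1 (\<Psi> u)) (at 0)"
  shows "0 \<in> crit k \<longleftrightarrow> 2 \<le> \<bar>m\<bar> \<or> (m = 0 \<and> deriv \<Psi> 0 = 0)"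
proof -
  have d\<Psi>: "(\<Psi> has_field_derivative deriv \<Psi> 0) (at 0)"
    using \<Psi> by (rule analytic_derivI)
  show ?thesis
  proof (cases "m \<ge> 0")
    case True
    define N where "N = nat m"
    define F where "F u = u ^ N * exp1 (\<Psi> u)" for u
    have "0 \<in> crit k \<longleftrightarrow> deriv F 0 = 0"
    proof (rule crit_iff_deriv_eq_0)
      show "F analytic_on {0}" unfolding F_def using \<Psi> by (intro analytic_intros)
      show "eventually (\<lambda>u. k u = F u) (at 0)"
        using keq True by (simp add: F_def N_def power_int_def)
    qed
    moreover have "deriv F 0 = (if N = 0 then exp1 (\<Psi> 0) * (2 * of_real pi * \<i> * deriv \<Psi> 0)
        else if N = 1 then exp1 (\<Psi> 0) else 0)"
      unfolding F_def
      by (rule deriv_power_mult_at_0) (auto simp: exp1_def intro!: derivative_eq_intros d\<Psi>)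
    ultimately show ?thesis
      using True by (auto simp: N_def nat_eq_iff)
  next
    case False
    define N where "N = nat (- m)"
    define F where "F u = u ^ N * exp1 (- \<Psi> u)" for u
    have "N \<ge> 1" using False by (simp add: N_def)
    have "0 \<in> crit k \<longleftrightarrow> deriv F 0 = 0"
    proof (rule crit_pole_iff_deriv_eq_0)
      show F: "F analytic_on {0}" unfolding F_def using \<Psi> by (intro analytic_intros)
      have "eventually (\<lambda>u. u \<noteq> 0) (at (0 :: complex))"
        by (rule eventually_neq_at_within)
      hence "eventually (\<lambda>u. F u \<noteq> 0) (at 0)"
        by eventually_elim (simp add: F_def)
      moreover have "F \<midarrow>0\<rightarrow> 0"
        using isContD[OF analytic_at_imp_isCont[OF F]] \<open>N \<ge> 1\<close> by (simp add: F_def power_0_left)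
      ultimately show "isolated_zero F 0"
        by (simp add: isolated_zero_def)
      show "eventually (\<lambda>u. k u = inverse (F u)) (at 0)"
        using keq False
        by (simp add: F_def N_def power_int_def exp1_def exp_minus field_simps)
    qed
    moreover have "deriv F 0 = (if N = 1 then exp1 (- \<Psi> 0) else 0)"
      unfolding F_def using \<open>N \<ge> 1\<close>
      by (subst deriv_power_mult_at_0) (auto simp: exp1_def intro!: derivative_eq_intros d\<Psi>)
    ultimately show ?thesis
      using False by (auto simp: N_def nat_eq_iff)
  qed
qed

lemma exponent_holomorphic_near_0:
  assumes \<Psi>: "\<Psi> nicely_meromorphic_on (- {0})"
    and keq: "\<And>u. u \<noteq> 0 \<Longrightarrow> \<not> is_pole \<Psi> u \<Longrightarrow> k u = u powi m * exp1 (\<Psi> u)"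
    and "defined_at k 0"
  obtains \<rho> \<Psi>' where "\<rho> > 0" "\<Psi>' holomorphic_on ball 0 \<rho>"
    "\<And>u. u \<in> ball 0 \<rho> - {0} \<Longrightarrow> \<not> is_pole \<Psi> u \<and> \<Psi> u = \<Psi>' u"
proof -
  \<comment> \<open>Near \<open>0\<close>, \<open>k(u) = u\<^sup>n h(u)\<close> with \<open>h\<close> zero-free, so \<open>exp1 \<circ> \<Psi> = u\<^sup>n\<^sup>-\<^sup>m h\<close>.\<close>
  have k_iso: "isolated_singularity_at k 0" and k_ne: "not_essential k 0"
    using \<open>defined_at k 0\<close> by (auto simp: defined_at_def meromorphic_at_iff)
  obtain r1 where r1: "r1 > 0" "k analytic_on ball 0 r1 - {0}"
    using k_iso by (auto simp: isolated_singularity_at_def)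
  have no_pole: "\<not> is_pole \<Psi> u" if u: "u \<in> ball 0 r1 - {0}" for u
  proof
    assume "is_pole \<Psi> u"
    have "u \<noteq> 0" using u by simp
    have iso: "isolated_singularity_at \<Psi> u"
      using \<Psi> \<open>u \<noteq> 0\<close> by (intro nicely_meromorphic_on_isolated_singularity) auto
    have "eventually (\<lambda>v. k v = v powi m * exp1 (\<Psi> v)) (at u)"
      using eventually_not_pole[OF iso] tendsto_imp_eventually_ne[OF tendsto_ident_at \<open>u \<noteq> 0\<close>]
      by eventually_elim (rule keq)
    hence "\<not> not_essential k u"
      using essential_if_pole_in_exponent[OF iso \<open>is_pole \<Psi> u\<close> \<open>u \<noteq> 0\<close>] by blast
    moreover have "k analytic_on {u}"
      using r1(2) u by (meson analytic_on_analytic_at)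
    ultimately show False
      using not_essential_analytic by blast
  qed
  have "\<Psi> analytic_on {u}" if "u \<in> ball 0 r1 - {0}" for u
    using \<Psi> _ no_pole[OF that] by (rule nicely_meromorphic_on_imp_analytic_at) (use that in simp)
  hence "\<Psi> analytic_on ball 0 r1 - {0}"
    using analytic_on_analytic_at by blast
  hence \<Psi>_holo: "\<Psi> holomorphic_on ball 0 r1 - {0}"
    by (rule analytic_imp_holomorphic)
  have "eventually (\<lambda>u. u \<in> ball 0 r1 - {0}) (at (0 :: complex))"
    using r1(1) by (intro eventually_at_in_open) auto
  hence "eventually (\<lambda>u. k u \<noteq> 0) (at 0)"
    by eventually_elim (auto simp: keq no_pole)
  hence "\<exists>\<^sub>F u in at 0. k u \<noteq> 0"
    by (intro eventually_frequently) auto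
  then obtain r2 where r2: "r2 > 0" "zor_poly k 0 holomorphic_on cball 0 r2"
    "\<And>u. u \<in> cball 0 r2 - {0} \<Longrightarrow> k u = zor_poly k 0 u * u powi zorder k 0 \<and> zor_poly k 0 u \<noteq> 0"
    and "zor_poly k 0 0 \<noteq> 0"
    using zorder_exist[OF k_iso k_ne] by auto
  define \<rho> where "\<rho> = min r1 r2"
  have "\<rho> > 0" using r1 r2 by (simp add: \<rho>_def)
  obtain \<Psi>' where \<Psi>': "\<Psi>' holomorphic_on ball 0 \<rho>" "\<And>u. u \<in> ball 0 \<rho> - {0} \<Longrightarrow> \<Psi> u = \<Psi>' u"
  proof (rule removable_if_exp1_eq_powi_mult[OF \<open>\<rho> > 0\<close>, of \<Psi> "zor_poly k 0" "zorder k 0 - m"])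
    show "\<Psi> holomorphic_on ball 0 \<rho> - {0}"
      using \<Psi>_holo by (rule holomorphic_on_subset) (auto simp: \<rho>_def)
    show "zor_poly k 0 holomorphic_on ball 0 \<rho>"
      using r2(2) by (rule holomorphic_on_subset) (auto simp: \<rho>_def)
    show "zor_poly k 0 u \<noteq> 0" if "u \<in> ball 0 \<rho>" for u
      using that r2(3)[of u] \<open>zor_poly k 0 0 \<noteq> 0\<close> by (cases "u = 0") (auto simp: \<rho>_def)
    show "exp1 (\<Psi> u) = u powi (zorder k 0 - m) * zor_poly k 0 u" if u: "u \<in> ball 0 \<rho> - {0}" for u
    proof -
      have "u powi m * exp1 (\<Psi> u) = zor_poly k 0 u * u powi zorder k 0"
        using keq[of u] no_pole[of u] r2(3)[of u] u by (auto simp: \<rho>_def)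
      thus ?thesis
        using u by (simp add: power_int_diff field_simps)
    qed
  qed blast
  show ?thesis
  proof
    show "\<rho> > 0" "\<Psi>' holomorphic_on ball 0 \<rho>" by fact+
    show "\<not> is_pole \<Psi> u \<and> \<Psi> u = \<Psi>' u" if "u \<in> ball 0 \<rho> - {0}" for u
      using that no_pole[of u] \<Psi>'(2)[of u] by (auto simp: \<rho>_def)
  qed
qed

lemma crit_0_iff:
  assumes \<Psi>: "\<Psi> nicely_meromorphic_on (- {0})"
    and keq: "\<And>u. u \<noteq> 0 \<Longrightarrow> \<not> is_pole \<Psi> u \<Longrightarrow> k u = u powi m * exp1 (\<Psi> u)"
  shows "0 \<in> crit k \<longleftrightarrow> defined_at k 0 \<and> (2 \<le> \<bar>m\<bar> \<or> (m = 0 \<and> deriv (remove_sings \<Psi>) 0 = 0))"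
proof (cases "defined_at k 0")
  case False
  thus ?thesis by (simp add: crit_def)
next
  case True
  then obtain \<rho> \<Psi>' where \<rho>: "\<rho> > 0" and \<Psi>': "\<Psi>' holomorphic_on ball 0 \<rho>"
    and eq: "\<And>u. u \<in> ball 0 \<rho> - {0} \<Longrightarrow> \<not> is_pole \<Psi> u \<and> \<Psi> u = \<Psi>' u"
    using exponent_holomorphic_near_0[OF \<Psi> keq] by blast
  have "\<Psi>' analytic_on {0}"
    using \<Psi>' \<rho> by (intro holomorphic_on_imp_analytic_at[of _ "ball 0 \<rho>"]) auto
  have "eventually (\<lambda>u. u \<in> ball 0 \<rho> - {0}) (at (0 :: complex))"
    using \<rho> by (intro eventually_at_in_open) auto
  hence "eventually (\<lambda>u. k u = u powi m * exp1 (\<Psi>' u)) (at 0)"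
    by eventually_elim (use eq keq in force)
  hence "0 \<in> crit k \<longleftrightarrow> 2 \<le> \<bar>m\<bar> \<or> (m = 0 \<and> deriv \<Psi>' 0 = 0)"
    using \<open>\<Psi>' analytic_on {0}\<close> by (intro crit_0_powi_mult_exp1)
  moreover have "deriv (remove_sings \<Psi>) 0 = deriv \<Psi>' 0"
  proof (rule deriv_cong_ev)
    have "remove_sings \<Psi> u = \<Psi>' u" if "u \<in> ball 0 \<rho>" for u
      using that \<rho> \<Psi>' eq
      by (intro remove_sings_eqI tendsto_if_eq_off_point[where S = "ball 0 \<rho>" and z = 0]
          holomorphic_on_imp_continuous_on) auto
    moreover have "eventually (\<lambda>u. u \<in> ball 0 \<rho>) (nhds (0 :: complex))"
      using \<rho> by (intro eventually_nhds_in_open) auto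
    ultimately show "eventually (\<lambda>u. remove_sings \<Psi> u = \<Psi>' u) (nhds 0)"
      by (auto elim: eventually_mono)
  qed simp
  ultimately show ?thesis
    using True by simp
qed

section \<open>Lifts and projections via exp1\<close>

lemma eventually_eq_lift:
  assumes "f nicely_meromorphic_on UNIV"
    and "\<And>z. \<not> is_pole f z \<Longrightarrow> f z = of_int l * z + \<Phi> (exp1 z)"
  shows "eventually (\<lambda>u. f u = of_int l * u + \<Phi> (exp1 u)) (at z)"
proof -
  have "eventually (\<lambda>u. \<not> is_pole f u) (at z)"
    using assms(1) by (intro eventually_not_pole nicely_meromorphic_on_isolated_singularity) auto
  thus ?thesis by (rule eventually_mono) (use assms(2) in auto)
qed

lemma is_pole_lift_iff:
  assumes fm: "f nicely_meromorphic_on UNIV" and \<Phi>m: "\<Phi> nicely_meromorphic_on (- {0})"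
    and f_eq: "\<And>z. \<not> is_pole f z \<Longrightarrow> f z = of_int l * z + \<Phi> (exp1 z)"
  shows "is_pole f z \<longleftrightarrow> is_pole \<Phi> (exp1 z)"
proof -
  have ev: "eventually (\<lambda>u. of_int l * u + \<Phi> (exp1 u) = f u) (at z)"
    using eventually_eq_lift[OF fm] f_eq by (simp add: eq_commute)
  show ?thesis
  proof
    assume "is_pole \<Phi> (exp1 z)"
    moreover have "exp1 \<midarrow>z\<rightarrow> exp1 z"
      unfolding exp1_def by (intro tendsto_intros)
    ultimately have "is_pole (\<lambda>u. \<Phi> (exp1 u)) z"
      using eventually_exp1_neq by (rule is_pole_compose)
    hence "is_pole (\<lambda>u. of_int l * u + \<Phi> (exp1 u)) z"
      unfolding is_pole_def
      by (intro tendsto_add_filterlim_at_infinity[of _ "of_int l * z"]) (auto intro!: tendsto_intros)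
    thus "is_pole f z"
      using ev by (rule is_pole_transform) simp
  next
    assume "is_pole f z"
    show "is_pole \<Phi> (exp1 z)"
    proof (rule ccontr)
      assume "\<not> is_pole \<Phi> (exp1 z)"
      hence "\<Phi> analytic_on {exp1 z}"
        using \<Phi>m by (intro nicely_meromorphic_on_imp_analytic_at) auto
      hence "(\<lambda>u. of_int l * u + \<Phi> (exp1 u)) \<midarrow>z\<rightarrow> of_int l * z + \<Phi> (exp1 z)"
        by (intro isContD analytic_at_imp_isCont analytic_intros analytic_at_comp_exp1)
      hence "f \<midarrow>z\<rightarrow> of_int l * z + \<Phi> (exp1 z)"
        using ev by (rule Lim_transform_eventually)
      thus False
        using \<open>is_pole f z\<close> not_is_pole_if_tendsto by blast
    qed
  qed
qed

lemma deriv_lift: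
  assumes fm: "f nicely_meromorphic_on UNIV" and \<Phi>m: "\<Phi> nicely_meromorphic_on (- {0})"
    and f_eq: "\<And>z. \<not> is_pole f z \<Longrightarrow> f z = of_int l * z + \<Phi> (exp1 z)"
    and "\<not> is_pole f z"
  shows "deriv f z = of_int l + 2 * of_real pi * \<i> * exp1 z * deriv \<Phi> (exp1 z)"
proof -
  have "\<not> is_pole \<Phi> (exp1 z)"
    using is_pole_lift_iff[where l = l, OF fm \<Phi>m f_eq] assms(4) by simp
  hence "\<Phi> analytic_on {exp1 z}"
    using \<Phi>m by (intro nicely_meromorphic_on_imp_analytic_at) auto
  hence d\<Phi>: "(\<Phi> has_field_derivative deriv \<Phi> (exp1 z)) (at (exp1 z))"
    by (intro analytic_derivI) auto
  have "eventually (\<lambda>u. f u = of_int l * u + \<Phi> (exp1 u)) (nhds z)"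
    using eventually_eq_lift[OF fm] f_eq assms(4) by (simp add: eventually_nhds_conv_at)
  hence "deriv f z = deriv (\<lambda>u. of_int l * u + \<Phi> (exp1 u)) z"
    by (rule deriv_cong_ev) simp
  also have "\<dots> = of_int l * 1 + deriv \<Phi> (exp1 z) * (2 * of_real pi * \<i> * exp1 z)"
    by (intro DERIV_imp_deriv DERIV_add DERIV_cmult DERIV_ident
        DERIV_chain2[OF d\<Phi> has_field_derivative_exp1])
  also have "\<dots> = of_int l + 2 * of_real pi * \<i> * exp1 z * deriv \<Phi> (exp1 z)"
    by (simp add: algebra_simps)
  finally show ?thesis .
qed

lemma crit_projection_iff:
  assumes \<Phi>m: "\<Phi> nicely_meromorphic_on (- {0})"
    and g_eq: "\<And>w. w \<noteq> 0 \<Longrightarrow> \<not> is_pole \<Phi> w \<Longrightarrow> g w = w powi l * exp1 (\<Phi> w)"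
    and "w \<noteq> 0" "\<not> is_pole \<Phi> w"
  shows "w \<in> crit g \<longleftrightarrow> of_int l + 2 * of_real pi * \<i> * w * deriv \<Phi> w = 0"
proof -
  define G where "G u = u powi l * exp1 (\<Phi> u)" for u
  have \<Phi>a: "\<Phi> analytic_on {w}"
    using \<Phi>m _ \<open>\<not> is_pole \<Phi> w\<close> by (rule nicely_meromorphic_on_imp_analytic_at) (use \<open>w \<noteq> 0\<close> in simp)
  have iso: "isolated_singularity_at \<Phi> w"
    using \<Phi>m by (rule nicely_meromorphic_on_isolated_singularity) (use \<open>w \<noteq> 0\<close> in simp)
  have "eventually (\<lambda>u. g u = G u) (at w)"
    using eventually_not_pole[OF iso] tendsto_imp_eventually_ne[OF tendsto_ident_at \<open>w \<noteq> 0\<close>]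
    by eventually_elim (simp add: G_def g_eq)
  moreover have "G analytic_on {w}"
    unfolding G_def using \<Phi>a \<open>w \<noteq> 0\<close> by (intro analytic_intros) auto
  ultimately have "w \<in> crit g \<longleftrightarrow> deriv G w = 0"
    by (intro crit_iff_deriv_eq_0)
  also have "deriv G w = w powi (l - 1) * exp1 (\<Phi> w) * (of_int l + 2 * of_real pi * \<i> * w * deriv \<Phi> w)"
  proof -
    have d\<Phi>: "(\<Phi> has_field_derivative deriv \<Phi> w) (at w)"
      using \<Phi>a by (rule analytic_derivI)
    have "deriv G w = of_int l * w powi (l - 1) * 1 * exp1 (\<Phi> w)
        + 2 * of_real pi * \<i> * exp1 (\<Phi> w) * deriv \<Phi> w * w powi l"
      unfolding G_def using \<open>w \<noteq> 0\<close>
      by (intro DERIV_imp_deriv DERIV_mult DERIV_power_int DERIV_ident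
          DERIV_chain2[OF has_field_derivative_exp1 d\<Phi>]) simp
    moreover have "w powi l = w powi (l - 1) * w"
      using \<open>w \<noteq> 0\<close> by (simp add: power_int_diff)
    ultimately show ?thesis
      by (simp add: algebra_simps)
  qed
  also have "\<dots> = 0 \<longleftrightarrow> of_int l + 2 * of_real pi * \<i> * w * deriv \<Phi> w = 0"
    using \<open>w \<noteq> 0\<close> by simp
  finally show ?thesis .
qed

lemma not_crit_projection_at_pole:
  assumes \<Phi>m: "\<Phi> nicely_meromorphic_on (- {0})"
    and g_eq: "\<And>w. w \<noteq> 0 \<Longrightarrow> \<not> is_pole \<Phi> w \<Longrightarrow> g w = w powi l * exp1 (\<Phi> w)"
    and "w \<noteq> 0" "is_pole \<Phi> w"
  shows "w \<notin> crit g"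
proof -
  have iso: "isolated_singularity_at \<Phi> w"
    using \<Phi>m by (rule nicely_meromorphic_on_isolated_singularity) (use \<open>w \<noteq> 0\<close> in simp)
  have "eventually (\<lambda>u. g u = u powi l * exp1 (\<Phi> u)) (at w)"
    using eventually_not_pole[OF iso] tendsto_imp_eventually_ne[OF tendsto_ident_at \<open>w \<noteq> 0\<close>]
    by eventually_elim (simp add: g_eq)
  hence "\<not> not_essential g w"
    by (rule essential_if_pole_in_exponent[OF iso \<open>is_pole \<Phi> w\<close> \<open>w \<noteq> 0\<close>])
  thus ?thesis
    by (auto simp: crit_def defined_at_def meromorphic_at_iff)
qed

lemma is_pole_compose_inverse_iff:
  fixes f :: "complex \<Rightarrow> complex"
  assumes "z \<noteq> 0"
  shows "is_pole (\<lambda>u. f (inverse u)) z \<longleftrightarrow> is_pole f (inverse z)"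
proof -
  have pole: "is_pole (\<lambda>u. h (inverse u)) v" if "is_pole h (inverse v)" "v \<noteq> 0" for h and v :: complex
  proof (rule is_pole_compose[OF that(1)])
    show "inverse \<midarrow>v\<rightarrow> inverse v"
      using \<open>v \<noteq> 0\<close> by (intro tendsto_intros)
    show "eventually (\<lambda>u. inverse u \<noteq> inverse v) (at v)"
      by (simp add: eventually_neq_at_within)
  qed
  show ?thesis
    using pole[of f z] pole[of "\<lambda>u. f (inverse u)" "inverse z"] assms by auto
qed

lemma nicely_meromorphic_on_compose_inverse:
  assumes "f nicely_meromorphic_on (- {0})"
  shows "(\<lambda>u. f (inverse u)) nicely_meromorphic_on (- {0})"
proof -
  have mero: "f meromorphic_on - {0}"
    and cases: "\<And>w. w \<noteq> 0 \<Longrightarrow> is_pole f w \<and> f w = 0 \<or> f \<midarrow>w\<rightarrow> f w"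
    using assms by (auto simp: nicely_meromorphic_on_def)
  have "(\<lambda>u. f (inverse u)) meromorphic_on - {0}"
    by (rule meromorphic_on_compose[OF mero]) (auto intro!: analytic_on_inverse)
  moreover have "is_pole (\<lambda>u. f (inverse u)) z \<and> f (inverse z) = 0
      \<or> (\<lambda>u. f (inverse u)) \<midarrow>z\<rightarrow> f (inverse z)" if "z \<noteq> 0" for z
  proof -
    have "is_pole f (inverse z) \<and> f (inverse z) = 0 \<or> f \<midarrow>inverse z\<rightarrow> f (inverse z)"
      using cases[of "inverse z"] that by simp
    thus ?thesis
    proof (elim disjE)
      assume "is_pole f (inverse z) \<and> f (inverse z) = 0"
      thus ?thesis
        using is_pole_compose_inverse_iff[OF that] by blast
    next
      assume "f \<midarrow>inverse z\<rightarrow> f (inverse z)"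
      hence "isCont (\<lambda>u. f (inverse u)) z"
        using that
        by (intro isCont_o2[where f = inverse and g = f]) (auto simp: isCont_def intro!: tendsto_intros)
      thus ?thesis
        by (simp add: isCont_def)
    qed
  qed
  ultimately show ?thesis
    by (auto simp: nicely_meromorphic_on_def)
qed

locale exp1_projection =
  fixes f g \<Phi> :: "complex \<Rightarrow> complex" and l :: int
  assumes f_mero: "f nicely_meromorphic_on UNIV"
    and \<Phi>_mero: "\<Phi> nicely_meromorphic_on (- {0})"
    and f_eq: "\<And>z. \<not> is_pole f z \<Longrightarrow> f z = of_int l * z + \<Phi> (exp1 z)"
    and g_eq: "\<And>w. w \<noteq> 0 \<Longrightarrow> \<not> is_pole \<Phi> w \<Longrightarrow> g w = w powi l * exp1 (\<Phi> w)"
begin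

text \<open>\<open>q w = w g'(w) / g(w)\<close>, and \<open>f'(z) = q (exp1 z)\<close>.\<close>

definition q :: "complex \<Rightarrow> complex" where
  "q w = of_int l + 2 * of_real pi * \<i> * w * deriv \<Phi> w"

lemma is_pole_f_iff: "is_pole f z \<longleftrightarrow> is_pole \<Phi> (exp1 z)"
  by (rule is_pole_lift_iff[where l = l, OF f_mero \<Phi>_mero f_eq])

lemma deriv_f: "\<not> is_pole f z \<Longrightarrow> deriv f z = q (exp1 z)"
  unfolding q_def by (rule deriv_lift[where l = l, OF f_mero \<Phi>_mero f_eq])

lemma crit_f_iff: "\<not> is_pole f z \<Longrightarrow> z \<in> crit f \<longleftrightarrow> q (exp1 z) = 0"
  using crit_iff_deriv_eq_0[of f z f] nicely_meromorphic_on_imp_analytic_at[OF f_mero] deriv_f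
  by simp

lemma crit_g_iff: "w \<noteq> 0 \<Longrightarrow> w \<in> crit g \<longleftrightarrow> \<not> is_pole \<Phi> w \<and> q w = 0"
  using crit_projection_iff[OF \<Phi>_mero g_eq] not_crit_projection_at_pole[OF \<Phi>_mero g_eq]
  by (auto simp: q_def)

lemma crit_g_minus_0: "crit g - {0} = exp1 ` (crit f - {z. is_pole f z})"
proof (intro equalityI subsetI)
  fix w
  assume "w \<in> crit g - {0}"
  hence "w \<noteq> 0" "\<not> is_pole \<Phi> w" "q w = 0"
    using crit_g_iff by auto
  define z where "z = Ln w / (2 * of_real pi * \<i>)"
  have "exp1 z = w"
    using \<open>w \<noteq> 0\<close> by (simp add: z_def exp1_Ln)
  hence "\<not> is_pole f z"
    using is_pole_f_iff \<open>\<not> is_pole \<Phi> w\<close> by simp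
  moreover from this have "z \<in> crit f"
    using crit_f_iff \<open>q w = 0\<close> \<open>exp1 z = w\<close> by simp
  ultimately show "w \<in> exp1 ` (crit f - {z. is_pole f z})"
    using \<open>exp1 z = w\<close> by blast
next
  fix w
  assume "w \<in> exp1 ` (crit f - {z. is_pole f z})"
  then obtain z where z: "z \<in> crit f" "\<not> is_pole f z" "w = exp1 z"
    by blast
  hence "\<not> is_pole \<Phi> (exp1 z)" "q (exp1 z) = 0"
    using is_pole_f_iff crit_f_iff by auto
  thus "w \<in> crit g - {0}"
    using crit_g_iff[of "exp1 z"] z(3) by simp
qed

lemma infinite_crit_f:
  assumes "\<not> is_pole f z" "deriv f z = 0"
  shows "infinite (crit f)" "crit g - {0} \<noteq> {}"
proof -
  have "q (exp1 z) = 0"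
    using deriv_f assms by simp
  have "z + of_int n \<in> crit f" for n
  proof -
    have "\<not> is_pole f (z + of_int n)"
      using is_pole_f_iff assms(1) by simp
    thus ?thesis
      using crit_f_iff \<open>q (exp1 z) = 0\<close> by simp
  qed
  hence "range (\<lambda>n::int. z + of_int n) \<subseteq> crit f"
    by blast
  moreover have "inj (\<lambda>n::int. z + of_int n)"
    by (auto simp: inj_def)
  hence "infinite (range (\<lambda>n::int. z + of_int n))"
    using finite_imageD infinite_UNIV_int by blast
  ultimately show "infinite (crit f)"
    by (rule infinite_super)
  show "crit g - {0} \<noteq> {}"
    using assms crit_f_iff crit_g_minus_0 \<open>q (exp1 z) = 0\<close> by blast
qed

lemma crit_g_0_iff:
  "0 \<in> crit g \<longleftrightarrow> defined_at g 0 \<and> (2 \<le> \<bar>l\<bar> \<or> (l = 0 \<and> deriv (remove_sings \<Phi>) 0 = 0))"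
  using \<Phi>_mero g_eq by (rule crit_0_iff)

lemma crit_g_infinity_iff:
  "0 \<in> crit (\<lambda>u. g (inverse u)) \<longleftrightarrow> defined_at (\<lambda>u. g (inverse u)) 0 \<and>
     (2 \<le> \<bar>l\<bar> \<or> (l = 0 \<and> deriv (remove_sings (\<lambda>u. \<Phi> (inverse u))) 0 = 0))"
proof -
  have "g (inverse u) = u powi (- l) * exp1 (\<Phi> (inverse u))"
    if "u \<noteq> 0" "\<not> is_pole (\<lambda>u. \<Phi> (inverse u)) u" for u
    using that g_eq[of "inverse u"] is_pole_compose_inverse_iff[of u \<Phi>]
    by (simp add: power_int_inverse power_int_minus)
  from crit_0_iff[OF nicely_meromorphic_on_compose_inverse[OF \<Phi>_mero] this]
  show ?thesis by simp
qed

end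

theorem proposition3p7:
  fixes f g \<Phi> :: "complex \<Rightarrow> complex" and l :: int
  assumes f_tr: "transcendental_mero f"
    and \<Phi>_mero: "\<Phi> nicely_meromorphic_on (- {0})"
    and f_eq: "\<And>z. \<not> is_pole f z \<Longrightarrow> f z = of_int l * z + \<Phi> (exp1 z)"
    and g_eq: "\<And>w. w \<noteq> 0 \<Longrightarrow> \<not> is_pole \<Phi> w \<Longrightarrow> g w = w powi l * exp (2 * of_real pi * \<i> * \<Phi> w)"
    and proj: "\<And>z. \<not> is_pole f z \<Longrightarrow> g (exp1 z) = exp1 (f z)"
  shows "crit g - {0} = exp1 ` (crit f - {z. is_pole f z})
     \<and> ((\<exists>z. \<not> is_pole f z \<and> deriv f z = 0) \<longrightarrow> infinite (crit f) \<and> crit g - {0} \<noteq> {})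
     \<and> (0 \<in> crit g \<longleftrightarrow> defined_at g 0 \<and>
           (\<bar>l\<bar> \<ge> 2 \<or> (l = 0 \<and> deriv (remove_sings \<Phi>) 0 = 0)))
     \<and> (0 \<in> crit (\<lambda>u. g (inverse u)) \<longleftrightarrow> defined_at (\<lambda>u. g (inverse u)) 0 \<and>
           (\<bar>l\<bar> \<ge> 2 \<or> (l = 0 \<and> deriv (remove_sings (\<lambda>u. \<Phi> (inverse u))) 0 = 0)))"
proof -
  interpret exp1_projection f g \<Phi> l
    using f_tr \<Phi>_mero f_eq g_eq
    by unfold_locales (auto simp: transcendental_mero_def exp1_def)
  show ?thesis
    using crit_g_minus_0 infinite_crit_f crit_g_0_iff crit_g_infinity_iff by blast
qed

end
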